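(* Let $D=(E,\mathcal{F})$ be a delta-matroid. Then ${}^{\partial}w_{D}(z)$ is a constant (i.e. equals some integer $k$) if and only if $|\mathcal{F}|=1$.
   Context: A delta-matroid is a set system $(E,\mathcal{F})$, $\mathcal{F}\ne\emptyset$ a family of subsets of finite $E$, satisfying: for all $X,Y\in\mathcal{F}$ and $u\in X\Delta Y$ there is $v\in X\Delta Y$ (possibly $v=u$) with $X\Delta\{u,v\}\in\mathcal{F}$. Twist: $D*A=(E,\{A\Delta X:X\in\mathcal{F}\})$. Width $w(D)$ = maximum minus minimum cardinality of feasible sets; twist polynomial ${}^{\partial}w_{D}(z)=\sum_{A\subseteq E}z^{w(D*A)}$. *)

theory Defs
  imports Main "HOL-Computational_Algebra.Polynomial"
begin

definition symdiff :: "'a set \<Rightarrow> 'a set \<Rightarrow> 'a set" (infixl "\<Delta>" 65) where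
  "symdiff X Y = (X - Y) \<union> (Y - X)"

definition delta_matroid :: "'a set \<Rightarrow> 'a set set \<Rightarrow> bool" where
  "delta_matroid E F \<longleftrightarrow> finite E \<and> F \<noteq> {} \<and> (\<forall>X\<in>F. X \<subseteq> E) \<and>
     (\<forall>X\<in>F. \<forall>Y\<in>F. \<forall>u\<in>X \<Delta> Y. \<exists>v\<in>X \<Delta> Y. X \<Delta> {u, v} \<in> F)"

definition twist :: "'a set set \<Rightarrow> 'a set \<Rightarrow> 'a set set" where
  "twist F A = (\<lambda>X. A \<Delta> X) ` F"

definition width :: "'a set set \<Rightarrow> nat" where
  "width F = Max (card ` F) - Min (card ` F)"

definition twist_poly :: "'a set \<Rightarrow> 'a set set \<Rightarrow> int poly" where
  "twist_poly E F = (\<Sum>A\<in>Pow E. monom 1 (width (twist F A)))"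

end

theory Submission
  imports Defs
begin

text \<open>Twisting by a feasible set X puts the empty set and X \<Delta> Y into the twisted family for every
  other feasible Y, so its width is positive as soon as there are two feasible sets; with a single
  feasible set every twist has width 0. As the coefficient of z^n in the twist polynomial counts the
  twists of width n, the polynomial is constant exactly when all twists have width 0.\<close>

lemma width_twist_singleton: "width (twist {X} A) = 0"
  by (simp add: twist_def width_def)

lemma width_twist_pos:
  assumes "finite F" and "\<forall>Z\<in>F. finite Z" and "X \<in> F" and "Y \<in> F" and "X \<noteq> Y"
  shows "0 < width (twist F X)"
proof -
  have fin_twist: "finite (card ` twist F X)"
    using assms(1) by (simp add: twist_def)
  have "{} \<in> twist F X"
    using assms(3) by (force simp: twist_def symdiff_def)
  then have "Min (card ` twist F X) = 0"
    using fin_twist by (metis Min_le card.empty image_eqI le_zero_eq)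
  have "X \<Delta> Y \<in> twist F X"
    using assms(4) by (force simp: twist_def)
  moreover have "0 < card (X \<Delta> Y)"
    using assms(2-5) by (auto simp: symdiff_def card_gt_0_iff)
  ultimately have "0 < Max (card ` twist F X)"
    using fin_twist by (meson Max_ge image_eqI less_le_trans)
  with \<open>Min (card ` twist F X) = 0\<close> show ?thesis
    by (simp add: width_def)
qed

lemma coeff_twist_poly:
  assumes "finite E"
  shows "coeff (twist_poly E F) n = int (card {A \<in> Pow E. width (twist F A) = n})"
proof -
  have "coeff (twist_poly E F) n = (\<Sum>A\<in>Pow E. if width (twist F A) = n then 1 else 0)"
    by (simp add: twist_poly_def coeff_sum coeff_monom)
  also have "\<dots> = int (card {A \<in> Pow E. width (twist F A) = n})"
    using assms by (simp add: sum.If_cases Int_def)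
  finally show ?thesis .
qed

lemma twist_poly_constant_iff:
  assumes "finite E"
  shows "(\<exists>k. twist_poly E F = [:k:]) \<longleftrightarrow> (\<forall>A\<in>Pow E. width (twist F A) = 0)"
proof
  assume "\<exists>k. twist_poly E F = [:k:]"
  then have "coeff (twist_poly E F) n = 0" if "0 < n" for n
    using that by (auto simp: coeff_pCons split: nat.split)
  then have "{A \<in> Pow E. width (twist F A) = n} = {}" if "0 < n" for n
    using that assms by (simp add: coeff_twist_poly)
  then show "\<forall>A\<in>Pow E. width (twist F A) = 0"
    by blast
next
  assume "\<forall>A\<in>Pow E. width (twist F A) = 0"
  then have "twist_poly E F = (\<Sum>A\<in>Pow E. monom 1 0)"
    by (simp add: twist_poly_def)
  then show "\<exists>k. twist_poly E F = [:k:]"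
    by (simp add: monom_0 of_nat_poly)
qed

lemma twist_widths_zero_iff_card_eq_1:
  assumes "finite E" and "F \<subseteq> Pow E" and "F \<noteq> {}"
  shows "(\<forall>A\<in>Pow E. width (twist F A) = 0) \<longleftrightarrow> card F = 1"
proof
  assume widths_zero: "\<forall>A\<in>Pow E. width (twist F A) = 0"
  have "finite F" and "\<forall>Z\<in>F. finite Z"
    using assms(1,2) by (auto intro: finite_subset)
  have "X = Y" if "X \<in> F" and "Y \<in> F" for X Y
    using width_twist_pos[OF \<open>finite F\<close> \<open>\<forall>Z\<in>F. finite Z\<close> that] widths_zero that assms(2)
    by fastforce
  moreover obtain X where "X \<in> F"
    using assms(3) by blast
  ultimately have "F = {X}"
    by blast
  then show "card F = 1"
    by simp
next
  assume "card F = 1"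
  then obtain X where "F = {X}"
    by (rule card_1_singletonE)
  then show "\<forall>A\<in>Pow E. width (twist F A) = 0"
    by (simp add: width_twist_singleton)
qed

theorem mainTheorem6:
  fixes E :: "'a set" and F :: "'a set set"
  assumes "delta_matroid E F"
  shows "(\<exists>k::int. twist_poly E F = [:k:]) \<longleftrightarrow> card F = 1"
proof -
  have "finite E" and "F \<subseteq> Pow E" and "F \<noteq> {}"
    using assms by (auto simp: delta_matroid_def)
  then show ?thesis
    by (simp add: twist_poly_constant_iff twist_widths_zero_iff_card_eq_1)
qed

end
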